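(* Let ${\mathcal M}$ be a $q$-matroid on $\mathbb{F}_q^n$ of rank $k$ with $0<k<n$. Then there is no nonzero vector $x\in\mathbb{F}_q^n$ that belongs to every basis of ${\mathcal M}$.
   Context: A $q$-matroid is a pair $(E,\rho)$, $E=\mathbb{F}_q^n$, with $\rho$ from the set of subspaces of $E$ to $\mathbb{Z}_{\ge0}$ satisfying $0\le\rho(X)\le\dim X$, $\rho(X)\le\rho(Y)$ for $X\subseteq Y$, and $\rho(X+Y)+\rho(X\cap Y)\le\rho(X)+\rho(Y)$; its rank is $\rho(E)$. A subspace $U$ is independent if $\rho(U)=\dim U$, and a basis is an independent subspace not strictly contained in any independent subspace. *)

theory Defs
  imports "HOL-Analysis.Analysis"
begin

text \<open>A q-matroid on E = F_q^n, with F_q modelled as an arbitrary finite field 'a and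
 E = 'a^'n (n = CARD('n)).
 The rank function is nat-valued (so nonnegativity is automatic) and the axioms
 are imposed on subspaces only.\<close>

definition is_qmatroid :: "(('a::{field,finite}^'n) set \<Rightarrow> nat) \<Rightarrow> bool" where
  "is_qmatroid \<rho> \<longleftrightarrow>
     (\<forall>X. vec.subspace X \<longrightarrow> \<rho> X \<le> vec.dim X) \<and>
     (\<forall>X Y. vec.subspace X \<longrightarrow> vec.subspace Y \<longrightarrow> X \<subseteq> Y \<longrightarrow> \<rho> X \<le> \<rho> Y) \<and>
     (\<forall>X Y. vec.subspace X \<longrightarrow> vec.subspace Y \<longrightarrow>
        \<rho> (X + Y) + \<rho> (X \<inter> Y) \<le> \<rho> X + \<rho> Y)"

definition qm_rank :: "(('a::{field,finite}^'n) set \<Rightarrow> nat) \<Rightarrow> nat" where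
  "qm_rank \<rho> = \<rho> UNIV"

definition qm_indep :: "(('a::{field,finite}^'n) set \<Rightarrow> nat) \<Rightarrow> ('a^'n) set \<Rightarrow> bool" where
  "qm_indep \<rho> U \<longleftrightarrow> vec.subspace U \<and> \<rho> U = vec.dim U"

definition qm_basis :: "(('a::{field,finite}^'n) set \<Rightarrow> nat) \<Rightarrow> ('a^'n) set \<Rightarrow> bool" where
  "qm_basis \<rho> B \<longleftrightarrow> qm_indep \<rho> B \<and> \<not> (\<exists>V. qm_indep \<rho> V \<and> B \<subset> V)"

end

theory Submission
  imports Defs
begin

text \<open>Suppose a nonzero vector x lies in every basis, and let B be an independent subspace of
  maximum dimension m; it is a basis, so x \<in> B, and B \<noteq> E since dim B = \<rho> B \<le> k < n.
  Split B = H \<oplus> \<langle>x\<rangle>, pick y \<notin> B and put X = H + \<langle>y\<rangle>, Y = H + \<langle>x + y\<rangle>.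
  Both have dimension m and meet B exactly in H, so neither contains x. Since B \<subseteq> X + Y,
  H \<subseteq> X \<inter> Y and \<rho> H \<ge> m - 1, submodularity gives \<rho> X + \<rho> Y \<ge> 2m - 1, so X or Y is
  independent of maximum dimension, i.e. a basis avoiding x.\<close>

context vector_space
begin

lemma span_insert_span: "span (insert a (span S)) = span (insert a S)"
  by (simp add: set_eq_iff span_breakdown_eq span_span)

lemma span_Un_eq_plus: "span (A \<union> C) = span A + span C"
  unfolding span_Un set_plus_def by blast

lemma span_insert_subset_plus:
  "span (insert x H) \<subseteq> span (insert y H) + span (insert (x + y) H)"
proof -
  let ?S = "insert y H \<union> insert (x + y) H"
  have "(x + y) - y \<in> span ?S"
    by (intro span_diff span_base) auto
  then have "insert x H \<subseteq> span ?S"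
    using span_superset[of ?S] by auto
  then have "span (insert x H) \<subseteq> span ?S"
    by (simp add: span_minimal)
  then show ?thesis
    by (simp only: span_Un_eq_plus)
qed

lemma obtain_complement_of_vector:
  assumes "subspace B" "x \<in> B" "x \<noteq> 0"
  obtains H where "subspace H" "x \<notin> H" "span (insert x H) = B"
proof -
  have "{x} \<subseteq> B"
    using assms(2) by simp
  moreover have "independent {x}"
    using assms(3) by (simp add: independent_insert)
  ultimately obtain S where S: "{x} \<subseteq> S" "S \<subseteq> B" "independent S" "B \<subseteq> span S"
    by (rule maximal_independent_subset_extend)
  have "span S = B"
    using span_minimal[OF S(2) assms(1)] S(4) by (rule antisym)
  have S_eq: "insert x (S - {x}) = S"
    using S(1) by blast
  have "x \<notin> span (S - {x})"
    using S(3) independent_insert[of x "S - {x}"] unfolding S_eq by simp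
  moreover have "span (insert x (span (S - {x}))) = B"
    unfolding span_insert_span S_eq by (rule \<open>span S = B\<close>)
  ultimately show thesis
    using that[of "span (S - {x})"] by simp
qed

lemma span_insert_inter_subspace:
  assumes "subspace B" "S \<subseteq> B" "z \<notin> B"
  shows "span (insert z S) \<inter> B = span S"
proof
  have "span S \<subseteq> B"
    using assms(2,1) by (rule span_minimal)
  then show "span S \<subseteq> span (insert z S) \<inter> B"
    using span_mono[OF subset_insertI] by blast
  show "span (insert z S) \<inter> B \<subseteq> span S"
  proof
    fix w assume w: "w \<in> span (insert z S) \<inter> B"
    then obtain c where c: "w - scale c z \<in> span S"
      by (auto simp: span_breakdown_eq)
    have "scale c z = w - (w - scale c z)"
      by simp
    also have "\<dots> \<in> B"
      using w c \<open>span S \<subseteq> B\<close> assms(1) by (blast intro: subspace_diff)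
    finally have "scale c z \<in> B" .
    have "c = 0"
    proof (rule ccontr)
      assume "c \<noteq> 0"
      then have "z = scale (inverse c) (scale c z)"
        by simp
      also have "\<dots> \<in> B"
        using assms(1) \<open>scale c z \<in> B\<close> by (rule subspace_scale)
      finally show False
        using assms(3) by simp
    qed
    then show "w \<in> span S"
      using c by simp
  qed
qed

end

lemma (in finite_dimensional_vector_space) dim_span_insert:
  assumes "subspace H" "z \<notin> H"
  shows "dim (span (insert z H)) = dim H + 1"
proof -
  have "z \<notin> span H"
    using assms by (metis span_eq_iff)
  then show ?thesis
    by (simp add: dim_insert)
qed

lemma qmatroid_rank_le_dim: "is_qmatroid \<rho> \<Longrightarrow> vec.subspace X \<Longrightarrow> \<rho> X \<le> vec.dim X"
  unfolding is_qmatroid_def by blast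

lemma qmatroid_rank_mono:
  "is_qmatroid \<rho> \<Longrightarrow> vec.subspace X \<Longrightarrow> vec.subspace Y \<Longrightarrow> X \<subseteq> Y \<Longrightarrow> \<rho> X \<le> \<rho> Y"
  unfolding is_qmatroid_def by blast

lemma qmatroid_rank_submodular:
  "is_qmatroid \<rho> \<Longrightarrow> vec.subspace X \<Longrightarrow> vec.subspace Y \<Longrightarrow> \<rho> (X + Y) + \<rho> (X \<inter> Y) \<le> \<rho> X + \<rho> Y"
  unfolding is_qmatroid_def by blast

lemma qmatroid_rank_span_insert_le:
  assumes "is_qmatroid \<rho>" "vec.subspace H"
  shows "\<rho> (vec.span (insert x H)) \<le> \<rho> H + 1"
proof -
  let ?L = "vec.span {x}"
  have "vec.span (insert x H) = vec.span H + ?L"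
    using vec.span_Un_eq_plus[of H "{x}"] by (simp add: add.commute)
  also have "vec.span H = H"
    using assms(2) by (rule vec.span_eq_iff[THEN iffD2])
  finally have span_eq: "vec.span (insert x H) = H + ?L" .
  moreover have "\<rho> (H + ?L) + \<rho> (H \<inter> ?L) \<le> \<rho> H + \<rho> ?L"
    by (rule qmatroid_rank_submodular[OF assms]) (rule vec.subspace_span)
  moreover have "\<rho> ?L \<le> 1"
    using qmatroid_rank_le_dim[OF assms(1), of ?L] vec.dim_le_card[of ?L "{x}"] by simp
  ultimately show ?thesis
    unfolding span_eq by linarith
qed

lemma qmatroid_rank_span_insert_exchange:
  assumes "is_qmatroid \<rho>" "vec.subspace H" "\<rho> (vec.span (insert x H)) = vec.dim H + 1"
  shows "\<rho> (vec.span (insert y H)) = vec.dim H + 1 \<or> \<rho> (vec.span (insert (x + y) H)) = vec.dim H + 1"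
proof -
  define X where "X = vec.span (insert y H)"
  define Y where "Y = vec.span (insert (x + y) H)"
  have subspaces: "vec.subspace X" "vec.subspace Y" "vec.subspace (X + Y)" "vec.subspace (X \<inter> Y)"
    unfolding X_def Y_def vec.span_Un_eq_plus[symmetric] by (auto intro: vec.subspace_inter)
  have "\<rho> (vec.span (insert x H)) \<le> \<rho> (X + Y)"
    using qmatroid_rank_mono[OF assms(1) vec.subspace_span subspaces(3)] vec.span_insert_subset_plus
    unfolding X_def Y_def by blast
  moreover have "H \<subseteq> X \<inter> Y"
    unfolding X_def Y_def
    using vec.span_superset[of "insert y H"] vec.span_superset[of "insert (x + y) H"] by blast
  then have "\<rho> H \<le> \<rho> (X \<inter> Y)"
    by (rule qmatroid_rank_mono[OF assms(1,2) subspaces(4)])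
  moreover have "\<rho> (vec.span (insert x H)) \<le> \<rho> H + 1"
    using qmatroid_rank_span_insert_le[OF assms(1,2)] .
  moreover have "\<rho> (X + Y) + \<rho> (X \<inter> Y) \<le> \<rho> X + \<rho> Y"
    using qmatroid_rank_submodular[OF assms(1) subspaces(1,2)] .
  moreover have "vec.dim (vec.span (insert z H)) \<le> vec.dim H + 1" for z
    using vec.dim_insert[of z H] by simp
  then have "\<rho> X \<le> vec.dim H + 1" "\<rho> Y \<le> vec.dim H + 1"
    using qmatroid_rank_le_dim[OF assms(1)] subspaces(1,2) unfolding X_def Y_def by (metis le_trans)+
  ultimately show ?thesis
    using assms(3) unfolding X_def Y_def by linarith
qed

lemma ex_qm_indep_max_dim:
  fixes \<rho> :: "('a::{field,finite}^'n) set \<Rightarrow> nat"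
  assumes "is_qmatroid \<rho>"
  shows "\<exists>B. qm_indep \<rho> B \<and> (\<forall>U. qm_indep \<rho> U \<longrightarrow> vec.dim U \<le> vec.dim B)"
proof (rule ex_has_greatest_nat)
  have "vec.dim {0::'a^'n} = 0"
    using vec.dim_span[of "{}"] by simp
  then show "qm_indep \<rho> {0}"
    using qmatroid_rank_le_dim[OF assms vec.subspace_single_0] unfolding qm_indep_def by simp
  show "\<forall>U. qm_indep \<rho> U \<longrightarrow> vec.dim U < Suc CARD('n)"
    using vec.dim_subset[OF subset_UNIV] vec_dim_card by (metis le_imp_less_Suc)
qed

lemma qm_basis_if_max_dim:
  assumes "qm_indep \<rho> B" "\<And>U. qm_indep \<rho> U \<Longrightarrow> vec.dim U \<le> vec.dim B"
  shows "qm_basis \<rho> B"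
  unfolding qm_basis_def
proof (intro conjI notI assms(1))
  assume "\<exists>V. qm_indep \<rho> V \<and> B \<subset> V"
  then obtain V where V: "qm_indep \<rho> V" "B \<subset> V"
    by blast
  then have "vec.span B \<subset> vec.span V"
    using assms(1) unfolding qm_indep_def by (metis vec.span_eq_iff)
  then have "vec.dim B < vec.dim V"
    by (rule vec.dim_psubset)
  with assms(2)[OF V(1)] show False
    by simp
qed

lemma ex_qm_indep_same_dim_avoiding:
  fixes \<rho> :: "('a::{field,finite}^'n) set \<Rightarrow> nat"
  assumes "is_qmatroid \<rho>" "qm_indep \<rho> B" "x \<in> B" "x \<noteq> 0" "y \<notin> B"
  obtains U where "qm_indep \<rho> U" "vec.dim U = vec.dim B" "x \<notin> U"
proof -
  have B: "vec.subspace B" "\<rho> B = vec.dim B"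
    using assms(2) unfolding qm_indep_def by auto
  obtain H where H: "vec.subspace H" "x \<notin> H" and B_eq: "vec.span (insert x H) = B"
    using vec.obtain_complement_of_vector[OF B(1) assms(3,4)] by blast
  have "H \<subseteq> B"
    using B_eq vec.span_superset by blast
  have "x + y \<notin> B"
    using B(1) assms(3,5) by (metis add_diff_cancel_left' vec.subspace_diff)
  then have "y \<notin> H" "x + y \<notin> H"
    using \<open>H \<subseteq> B\<close> assms(5) by blast+
  have dim_B: "vec.dim B = vec.dim H + 1"
    unfolding B_eq[symmetric] using H by (rule vec.dim_span_insert)
  define X where "X = vec.span (insert y H)"
  define Y where "Y = vec.span (insert (x + y) H)"
  have dims: "vec.dim X = vec.dim B" "vec.dim Y = vec.dim B"
    unfolding X_def Y_def dim_B
    using vec.dim_span_insert[OF H(1) \<open>y \<notin> H\<close>] vec.dim_span_insert[OF H(1) \<open>x + y \<notin> H\<close>] .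
  have "X \<inter> B = H" "Y \<inter> B = H"
    unfolding X_def Y_def
    using vec.span_insert_inter_subspace[OF B(1) \<open>H \<subseteq> B\<close>] assms(5) \<open>x + y \<notin> B\<close> H(1)
    by (simp_all add: vec.span_eq_iff[THEN iffD2])
  then have "x \<notin> X" "x \<notin> Y"
    using H(2) assms(3) by blast+
  have "\<rho> X = vec.dim X \<or> \<rho> Y = vec.dim Y"
    using qmatroid_rank_span_insert_exchange[OF assms(1) H(1), of x y] B(2) dim_B dims B_eq
    unfolding X_def Y_def by simp
  then show thesis
    using that vec.subspace_span dims \<open>x \<notin> X\<close> \<open>x \<notin> Y\<close> unfolding qm_indep_def X_def Y_def by metis
qed

theorem lemma5p4:
  fixes \<rho> :: "('a::{field,finite}^'n) set \<Rightarrow> nat" and k :: nat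
  assumes "is_qmatroid \<rho>" and "qm_rank \<rho> = k" and "0 < k" and "k < CARD('n)"
  shows "\<not> (\<exists>x::'a^'n. x \<noteq> 0 \<and> (\<forall>B. qm_basis \<rho> B \<longrightarrow> x \<in> B))"
proof
  assume "\<exists>x::'a^'n. x \<noteq> 0 \<and> (\<forall>B. qm_basis \<rho> B \<longrightarrow> x \<in> B)"
  then obtain x :: "'a^'n" where "x \<noteq> 0" and in_bases: "\<And>B. qm_basis \<rho> B \<Longrightarrow> x \<in> B"
    by blast
  obtain B where B: "qm_indep \<rho> B" and B_max: "\<And>U. qm_indep \<rho> U \<Longrightarrow> vec.dim U \<le> vec.dim B"
    using ex_qm_indep_max_dim[OF assms(1)] by blast
  have "x \<in> B"
    using in_bases qm_basis_if_max_dim B B_max by blast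
  have "B \<noteq> UNIV"
  proof
    assume "B = UNIV"
    then have "qm_rank \<rho> = CARD('n)"
      using B vec_dim_card unfolding qm_indep_def qm_rank_def by metis
    with assms(2,4) show False
      by simp
  qed
  then obtain y where "y \<notin> B"
    by blast
  obtain U where "qm_indep \<rho> U" "vec.dim U = vec.dim B" "x \<notin> U"
    using ex_qm_indep_same_dim_avoiding[OF assms(1) B \<open>x \<in> B\<close> \<open>x \<noteq> 0\<close> \<open>y \<notin> B\<close>] .
  then show False
    using in_bases qm_basis_if_max_dim B_max by metis
qed

end
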